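(* Let $\Gamma$ be a (connected, finite) graph. The image of the exterior intersection pairing \[\mathrm H_1(\Gamma)\otimes\mathrm H_1(\Gamma)\to\mathbb Q\cdot E^+,\qquad\gamma_0\otimes\gamma_1\mapsto\sum_{e\in E}e^*(\gamma_0)e^*(\gamma_1)\cdot e\] is exactly the span of the formal sums of the edges of the maximal cut systems of $\Gamma$.
   Context: A graph consists of finite sets of vertices, oriented edges $E$, half-edges, a source map $s$ and a fixed-point-free involution $e\mapsto e^{-1}$ on $E$ with $t(e)=s(e^{-1})$. $\mathbb Q\cdot E^+$ is the vector space with basis the unoriented edges (an oriented edge $e$ is identified with its unoriented class). $\mathrm H_1(\Gamma)=\mathrm H_1(\Gamma,\mathbb Q)$, and for an edge $e$, $e^*\in\mathrm H^1(\Gamma)$ gives the (signed) multiplicity of $e$ in a homology class. A bridge is an edge whose removal (with its inverse) disconnects $\Gamma$. A cut pair is a pair of non-bridge edges $e_0,e_1$ with $e_1\ne e_0^{\pm1}$ such that $\Gamma\setminus\{e_0^{\pm1},e_1^{\pm1}\}$ is disconnected with $s(e_0)$ and $s(e_1)$ in different components. The relation on non-bridge edges $e_0\sim e_1$ iff $(e_0,e_1)$ is a cut pair or $e_0=e_1$ is an equivalence relation; its equivalence classes are the maximal cut systems (possibly of size $1$). The formal sum of a maximal cut system is the sum in $\mathbb Q\cdot E^+$ of the unoriented classes of its edges. *)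

theory Defs
  imports Complex_Main
begin

text \<open>A finite graph: vertex set V, oriented edge set E, source map s and a
fixed-point-free involution iv on E (t e = s (iv e)).  Half-edges (legs) play
no role for H_1, connectivity, bridges or cut pairs and are omitted.\<close>

definition graph :: "'v set \<Rightarrow> 'e set \<Rightarrow> ('e \<Rightarrow> 'v) \<Rightarrow> ('e \<Rightarrow> 'e) \<Rightarrow> bool" where
  "graph V E s iv \<longleftrightarrow> finite V \<and> finite E \<and> (\<forall>e\<in>E. s e \<in> V) \<and>
     (\<forall>e\<in>E. iv e \<in> E \<and> iv (iv e) = e \<and> iv e \<noteq> e)"

definition tgt :: "('e \<Rightarrow> 'v) \<Rightarrow> ('e \<Rightarrow> 'e) \<Rightarrow> 'e \<Rightarrow> 'v" where
  "tgt s iv e = s (iv e)"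

definition adj :: "'e set \<Rightarrow> ('e \<Rightarrow> 'v) \<Rightarrow> ('e \<Rightarrow> 'e) \<Rightarrow> ('v \<times> 'v) set" where
  "adj F s iv = {(s e, tgt s iv e) | e. e \<in> F}"

definition connected_via :: "'v set \<Rightarrow> 'e set \<Rightarrow> ('e \<Rightarrow> 'v) \<Rightarrow> ('e \<Rightarrow> 'e) \<Rightarrow> bool" where
  "connected_via V F s iv \<longleftrightarrow> (\<forall>u\<in>V. \<forall>v\<in>V. (u, v) \<in> (adj F s iv)\<^sup>*)"

definition is_bridge :: "'v set \<Rightarrow> 'e set \<Rightarrow> ('e \<Rightarrow> 'v) \<Rightarrow> ('e \<Rightarrow> 'e) \<Rightarrow> 'e \<Rightarrow> bool" where
  "is_bridge V E s iv e \<longleftrightarrow> e \<in> E \<and> \<not> connected_via V (E - {e, iv e}) s iv"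

definition non_bridge :: "'v set \<Rightarrow> 'e set \<Rightarrow> ('e \<Rightarrow> 'v) \<Rightarrow> ('e \<Rightarrow> 'e) \<Rightarrow> 'e set" where
  "non_bridge V E s iv = {e \<in> E. \<not> is_bridge V E s iv e}"

definition cut_pair :: "'v set \<Rightarrow> 'e set \<Rightarrow> ('e \<Rightarrow> 'v) \<Rightarrow> ('e \<Rightarrow> 'e) \<Rightarrow> 'e \<Rightarrow> 'e \<Rightarrow> bool" where
  "cut_pair V E s iv e0 e1 \<longleftrightarrow>
     e0 \<in> non_bridge V E s iv \<and> e1 \<in> non_bridge V E s iv \<and>
     e1 \<noteq> e0 \<and> e1 \<noteq> iv e0 \<and>
     \<not> connected_via V (E - {e0, iv e0, e1, iv e1}) s iv \<and>
     (s e0, s e1) \<notin> (adj (E - {e0, iv e0, e1, iv e1}) s iv)\<^sup>*"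

definition cut_rel :: "'v set \<Rightarrow> 'e set \<Rightarrow> ('e \<Rightarrow> 'v) \<Rightarrow> ('e \<Rightarrow> 'e) \<Rightarrow> 'e \<Rightarrow> 'e \<Rightarrow> bool" where
  "cut_rel V E s iv e0 e1 \<longleftrightarrow>
     e0 \<in> non_bridge V E s iv \<and> e1 \<in> non_bridge V E s iv \<and>
     (cut_pair V E s iv e0 e1 \<or> e0 = e1)"

definition max_cut_systems :: "'v set \<Rightarrow> 'e set \<Rightarrow> ('e \<Rightarrow> 'v) \<Rightarrow> ('e \<Rightarrow> 'e) \<Rightarrow> 'e set set" where
  "max_cut_systems V E s iv =
     {{e1. cut_rel V E s iv e0 e1} | e0. e0 \<in> non_bridge V E s iv}"

text \<open>E^+ is modelled as functions 'e \<Rightarrow> rat: the value at an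
oriented edge f is the coefficient of the unoriented class of f.  The basis vector
of the unoriented class of e is the indicator of {e, iv e} (within E).\<close>
definition edge_vec :: "'e set \<Rightarrow> ('e \<Rightarrow> 'e) \<Rightarrow> 'e \<Rightarrow> 'e \<Rightarrow> rat" where
  "edge_vec E iv e = (\<lambda>f. if f \<in> E \<and> (f = e \<or> f = iv e) then 1 else 0)"

text \<open>A 1-chain is an antisymmetric function on
oriented edges (c (iv e) = - c e, supported on E); its boundary vanishes iff at every
vertex the sum over outgoing edges is 0.  There are no 2-cells, so H_1 = Z_1.
For a cycle c, e^*(c) = c e.\<close>
definition H1 :: "'v set \<Rightarrow> 'e set \<Rightarrow> ('e \<Rightarrow> 'v) \<Rightarrow> ('e \<Rightarrow> 'e) \<Rightarrow> ('e \<Rightarrow> rat) set" where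
  "H1 V E s iv = {c. (\<forall>e. e \<notin> E \<longrightarrow> c e = 0) \<and> (\<forall>e\<in>E. c (iv e) = - c e) \<and>
       (\<forall>v\<in>V. (\<Sum>e\<in>{e\<in>E. s e = v}. c e) = 0)}"

definition ext_pairing :: "'e set \<Rightarrow> ('e \<Rightarrow> 'e) \<Rightarrow> ('e \<Rightarrow> rat) \<Rightarrow> ('e \<Rightarrow> rat) \<Rightarrow> 'e \<Rightarrow> rat" where
  "ext_pairing E iv c0 c1 = (\<lambda>f. \<Sum>e\<in>E. c0 e * c1 e * edge_vec E iv e f)"

definition formal_sum :: "'e set \<Rightarrow> ('e \<Rightarrow> 'e) \<Rightarrow> 'e set \<Rightarrow> 'e \<Rightarrow> rat" where
  "formal_sum E iv C = (\<lambda>f. \<Sum>e\<in>C. edge_vec E iv e f)"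

definition rat_span :: "('e \<Rightarrow> rat) set \<Rightarrow> ('e \<Rightarrow> rat) set" where
  "rat_span S = {x. \<exists>F a. finite F \<and> F \<subseteq> S \<and> x = (\<lambda>f. \<Sum>v\<in>F. a v * v f)}"

end

theory Submission
  imports Defs "HOL-Library.Function_Algebras"
begin

(* Summing a cycle over the edges leaving a set of vertices gives 0. Hence cycles vanish on
   bridges, and all cycles agree on the two edges of a cut pair, as these are the only edges
   leaving the component of one of their sources. Conversely, if all cycles agree on two
   non-bridge edges e0 and e1, then every path closing e0 to a cycle must meet e1, which forces
   {e0, e1} to be a cut pair. So the maximal cut systems are the classes of non-bridge edges on
   which all cycles agree; the coefficients c0(e) c1(e) of a pairing are constant on them, so the
   pairing is a combination of their formal sums.
   For the converse, let K be the class of e0. Augmenting a path from t(e0) to s(e0) by a second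
   one that may reuse its edges only backwards or in K (a Menger-type argument) gives a flow of
   value 2, which splits into a path and a flow overlapping only on edges of K or their inverses.
   Closing both by e0 gives two cycles whose pairing is twice the formal sum of K. *)

section \<open>Rational span\<close>

global_interpretation rat_fun: module "\<lambda>(r::rat) (f::'a \<Rightarrow> rat) x. r * f x"
  by unfold_locales (simp_all add: fun_eq_iff algebra_simps)

lemma sum_fun_apply: "(\<Sum>i\<in>I. f i) x = (\<Sum>i\<in>I. f i x)"
  by (induction I rule: infinite_finite_induct) auto

lemma rat_span_eq_span: "rat_span S = rat_fun.span S"
  unfolding rat_span_def rat_fun.span_explicit by (auto simp: sum_fun_apply fun_eq_iff)

lemma rat_span_superset: "S \<subseteq> rat_span S"
  unfolding rat_span_eq_span by (rule rat_fun.span_superset)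

lemma rat_span_scale: "x \<in> rat_span S \<Longrightarrow> (\<lambda>f. r * x f) \<in> rat_span S"
  unfolding rat_span_eq_span by (rule rat_fun.span_scale)

lemma rat_span_sum:
  assumes "\<And>i. i \<in> I \<Longrightarrow> h i \<in> rat_span S"
  shows "(\<lambda>x. \<Sum>i\<in>I. h i x) \<in> rat_span S"
  using rat_fun.span_sum[of I h S] assms unfolding rat_span_eq_span sum_fun_apply[abs_def] by simp

lemma rat_span_eqI: "A \<subseteq> rat_span B \<Longrightarrow> B \<subseteq> rat_span A \<Longrightarrow> rat_span A = rat_span B"
  unfolding rat_span_eq_span by (rule rat_fun.span_eq[THEN iffD2]) simp

section \<open>Chains, boundaries and cuts\<close>

locale finite_graph =
  fixes V :: "'v set" and E :: "'e set" and s :: "'e \<Rightarrow> 'v" and iv :: "'e \<Rightarrow> 'e"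
  assumes graph: "graph V E s iv"
begin

abbreviation cycles :: "('e \<Rightarrow> rat) set" where
  "cycles \<equiv> H1 V E s iv"

lemma finite_V: "finite V"
  and finite_E: "finite E"
  and source_in_V: "e \<in> E \<Longrightarrow> s e \<in> V"
  and iv_in_E: "e \<in> E \<Longrightarrow> iv e \<in> E"
  and iv_iv [simp]: "e \<in> E \<Longrightarrow> iv (iv e) = e"
  and iv_neq: "e \<in> E \<Longrightarrow> iv e \<noteq> e"
  using graph unfolding graph_def by auto

lemma iv_eq_iff: "e \<in> E \<Longrightarrow> f \<in> E \<Longrightarrow> iv f = e \<longleftrightarrow> f = iv e"
  by auto

definition is_chain :: "('e \<Rightarrow> rat) \<Rightarrow> bool" where
  "is_chain c \<longleftrightarrow> (\<forall>e. e \<notin> E \<longrightarrow> c e = 0) \<and> (\<forall>e\<in>E. c (iv e) = - c e)"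

(* Counts outgoing edges, so a path from u to v has boundary dirac_diff u v. *)
definition boundary :: "('e \<Rightarrow> rat) \<Rightarrow> 'v \<Rightarrow> rat" where
  "boundary c x = (\<Sum>e | e \<in> E \<and> s e = x. c e)"

definition edge_chain :: "'e \<Rightarrow> 'e \<Rightarrow> rat" where
  "edge_chain e f = of_bool (f = e) - of_bool (f = iv e)"

definition dirac_diff :: "'v \<Rightarrow> 'v \<Rightarrow> 'v \<Rightarrow> rat" where
  "dirac_diff u v x = of_bool (x = u) - of_bool (x = v)"

lemma is_chain_add: "is_chain c \<Longrightarrow> is_chain d \<Longrightarrow> is_chain (\<lambda>f. c f + d f)"
  and is_chain_diff: "is_chain c \<Longrightarrow> is_chain d \<Longrightarrow> is_chain (\<lambda>f. c f - d f)"
  unfolding is_chain_def by auto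

lemma is_chain_edge_chain: "e \<in> E \<Longrightarrow> is_chain (edge_chain e)"
  unfolding is_chain_def edge_chain_def using iv_in_E iv_eq_iff by fastforce

lemma boundary_add: "boundary (\<lambda>f. c f + d f) = (\<lambda>x. boundary c x + boundary d x)"
  and boundary_diff: "boundary (\<lambda>f. c f - d f) = (\<lambda>x. boundary c x - boundary d x)"
  unfolding boundary_def by (simp_all add: sum.distrib sum_subtractf)

lemma boundary_edge_chain: "e \<in> E \<Longrightarrow> boundary (edge_chain e) = dirac_diff (s e) (s (iv e))"
  unfolding boundary_def edge_chain_def dirac_diff_def
  by (auto simp: sum_subtractf finite_E iv_in_E)

lemma edge_chain_self [simp]: "e \<in> E \<Longrightarrow> edge_chain e e = 1"
  unfolding edge_chain_def using iv_neq by force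

lemma edge_chain_other: "f \<noteq> e \<Longrightarrow> f \<noteq> iv e \<Longrightarrow> edge_chain e f = 0"
  unfolding edge_chain_def by simp

lemma mem_H1_iff: "c \<in> cycles \<longleftrightarrow> is_chain c \<and> boundary c = (\<lambda>_. 0)"
proof -
  have "boundary c x = 0" if "x \<notin> V" for x
    using that source_in_V unfolding boundary_def by (auto intro!: sum.neutral)
  then show ?thesis
    unfolding H1_def is_chain_def boundary_def by (auto simp: fun_eq_iff)
qed

lemma cycle_antisym: "c \<in> cycles \<Longrightarrow> e \<in> E \<Longrightarrow> c (iv e) = - c e"
  unfolding mem_H1_iff is_chain_def by blast

definition reachable :: "'e set \<Rightarrow> 'v \<Rightarrow> 'v set" where
  "reachable F a = {x. (a, x) \<in> (adj F s iv)\<^sup>*}"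

definition leaving :: "'v set \<Rightarrow> 'e set" where
  "leaving S = {e \<in> E. s e \<in> S \<and> s (iv e) \<notin> S}"

lemma adj_iff: "(x, y) \<in> adj F s iv \<longleftrightarrow> (\<exists>e\<in>F. s e = x \<and> s (iv e) = y)"
  unfolding adj_def tgt_def by auto

lemma leaving_reachable_notin:
  assumes "e \<in> leaving (reachable F a)"
  shows "e \<notin> F"
proof
  assume "e \<in> F"
  then have "(s e, s (iv e)) \<in> adj F s iv"
    unfolding adj_iff by blast
  with assms show False
    unfolding leaving_def reachable_def by (auto intro: rtrancl_into_rtrancl)
qed

lemma leaving_exists:
  assumes "(u, v) \<in> (adj F s iv)\<^sup>*" "F \<subseteq> E" "u \<in> S" "v \<notin> S"
  shows "\<exists>e\<in>F. e \<in> leaving S"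
proof (rule ccontr)
  assume "\<not> ?thesis"
  then have step: "y \<in> S \<Longrightarrow> (y, z) \<in> adj F s iv \<Longrightarrow> z \<in> S" for y z
    using assms(2) unfolding leaving_def adj_iff by blast
  have "v \<in> S"
    using assms(1) by (induction rule: rtrancl_induct) (use assms(3) step in blast)+
  with assms(4) show False ..
qed

lemma sum_leaving:
  assumes "is_chain c"
  shows "sum c (leaving S) = (\<Sum>x\<in>S \<inter> V. boundary c x)"
proof -
  define I where "I = {e \<in> E. s e \<in> S \<and> s (iv e) \<in> S}"
  have "bij_betw iv I I"
    by (rule bij_betw_byWitness[where f' = iv]) (auto simp: I_def iv_in_E)
  then have "sum c I = sum (c \<circ> iv) I"
    by (simp add: sum.reindex_bij_betw)
  also have "\<dots> = - sum c I"
    using assms unfolding is_chain_def I_def by (simp add: sum_negf)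
  finally have inner: "sum c I = 0" by simp
  have "sum c (leaving S) = sum c I + sum c (leaving S)"
    by (simp add: inner)
  also have "\<dots> = (\<Sum>e | e \<in> E \<and> s e \<in> S. c e)"
    by (subst sum.union_disjoint[symmetric]) (auto simp: I_def leaving_def finite_E intro!: sum.cong)
  also have "\<dots> = (\<Sum>x\<in>S \<inter> V. \<Sum>e | e \<in> {e \<in> E. s e \<in> S} \<and> s e = x. c e)"
    using finite_E finite_V source_in_V by (intro sum.group[symmetric]) auto
  also have "\<dots> = (\<Sum>x\<in>S \<inter> V. boundary c x)"
    unfolding boundary_def by (intro sum.cong) auto
  finally show ?thesis .
qed

lemma sum_leaving_cycle: "c \<in> cycles \<Longrightarrow> sum c (leaving S) = 0"
  using sum_leaving unfolding mem_H1_iff by simp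

lemma sum_leaving_flow:
  assumes "is_chain c" "boundary c = (\<lambda>x. a * dirac_diff u v x)" "u \<in> S \<inter> V" "v \<notin> S"
  shows "sum c (leaving S) = a"
proof -
  have "sum c (leaving S) = (\<Sum>x\<in>S \<inter> V. a * of_bool (x = u))"
    using assms unfolding sum_leaving[OF assms(1)] dirac_diff_def by (intro sum.cong) auto
  also have "\<dots> = a"
    using assms(3) finite_V by simp
  finally show ?thesis .
qed

lemma leaving_pair_cycle_eq:
  assumes "leaving S = {e, iv f}" "e \<noteq> iv f" "f \<in> E" "c \<in> cycles"
  shows "c e = c f"
  using sum_leaving_cycle[OF assms(4), of S] cycle_antisym[OF assms(4,3)] assms(1,2) by simp

(* A flow of value 1 from u to v with coefficients in {-1, 0, 1}, running along the oriented
   edges of A; it need not be a simple path. *)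
definition unit_path :: "'e set \<Rightarrow> 'v \<Rightarrow> 'v \<Rightarrow> ('e \<Rightarrow> rat) \<Rightarrow> bool" where
  "unit_path A u v p \<longleftrightarrow> is_chain p \<and> (\<forall>e. p e \<in> {-1, 0, 1}) \<and> (\<forall>e. p e = 1 \<longrightarrow> e \<in> A) \<and>
     boundary p = dirac_diff u v"

lemma unit_path_support:
  assumes "unit_path A u v p" "p f \<noteq> 0"
  shows "f \<in> E" "f \<in> A \<or> iv f \<in> A"
proof -
  show fE: "f \<in> E"
    using assms unfolding unit_path_def is_chain_def by blast
  have "p f = 1 \<or> p (iv f) = 1"
    using assms fE unfolding unit_path_def is_chain_def by force
  then show "f \<in> A \<or> iv f \<in> A"
    using assms(1) unfolding unit_path_def by blast
qed

lemma unit_path_vanishes: "unit_path A u v p \<Longrightarrow> f \<notin> A \<Longrightarrow> iv f \<notin> A \<Longrightarrow> p f = 0"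
  using unit_path_support(2) by blast

lemma unit_path_of_shortest_walk:
  assumes "A \<subseteq> E" "(u, v) \<in> adj A s iv ^^ n" "\<forall>k<n. (u, v) \<notin> adj A s iv ^^ k"
  shows "\<exists>p. unit_path A u v p \<and> (\<forall>f. p f \<noteq> 0 \<longrightarrow> (\<exists>k\<le>n. (u, s f) \<in> adj A s iv ^^ k))"
  using assms(2,3)
proof (induction n arbitrary: v)
  case 0
  then show ?case
    by (intro exI[of _ "\<lambda>_. 0"]) (simp add: unit_path_def is_chain_def boundary_def dirac_diff_def fun_eq_iff)
next
  case (Suc n)
  let ?R = "adj A s iv"
  from Suc.prems(1) obtain x where ux: "(u, x) \<in> ?R ^^ n" and xv: "(x, v) \<in> ?R"
    by auto
  have "\<forall>k<n. (u, x) \<notin> ?R ^^ k"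
    using Suc.prems(2) xv by (meson Suc_mono relpow_Suc_I)
  then obtain p where p: "unit_path A u x p"
    and near: "\<forall>f. p f \<noteq> 0 \<longrightarrow> (\<exists>k\<le>n. (u, s f) \<in> ?R ^^ k)"
    using Suc.IH[OF ux] by blast
  obtain e where e: "e \<in> A" "s e = x" "s (iv e) = v"
    using xv adj_iff by blast
  have eE: "e \<in> E"
    using e assms(1) by blast
  \<comment> \<open>minimality of the walk: the new edge ends outside the support of p\<close>
  have "p (iv e) = 0"
    using near Suc.prems(2) e(3) by (meson le_imp_less_Suc)
  then have "p e = 0"
    using p eE unfolding unit_path_def is_chain_def by (metis neg_equal_0_iff_equal)
  define p' where "p' f = p f + edge_chain e f" for f
  have p'_eq: "p' f = (if f = e then 1 else if f = iv e then -1 else p f)" for f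
    using \<open>p e = 0\<close> \<open>p (iv e) = 0\<close> iv_neq[OF eE] unfolding p'_def edge_chain_def by auto
  have "unit_path A u v p'"
    unfolding unit_path_def
  proof (intro conjI allI impI)
    show "is_chain p'"
      using p is_chain_add is_chain_edge_chain[OF eE] unfolding p'_def[abs_def] unit_path_def by blast
    show "boundary p' = dirac_diff u v"
      using p e unfolding p'_def[abs_def] boundary_add boundary_edge_chain[OF eE] unit_path_def
      by (auto simp: dirac_diff_def)
  qed (use p e in \<open>auto simp: p'_eq unit_path_def split: if_splits\<close>)
  moreover have "\<exists>k\<le>Suc n. (u, s f) \<in> ?R ^^ k" if "p' f \<noteq> 0" for f
    using that near ux Suc.prems(1) e unfolding p'_eq by (metis le_SucI order_refl)
  ultimately show ?case
    by blast
qed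

lemma unit_path_exists:
  assumes "A \<subseteq> E" "(u, v) \<in> (adj A s iv)\<^sup>*"
  obtains p where "unit_path A u v p"
proof -
  obtain n where "(u, v) \<in> adj A s iv ^^ n" "\<forall>k<n. (u, v) \<notin> adj A s iv ^^ k"
    using assms(2) exists_least_iff[of "\<lambda>n. (u, v) \<in> adj A s iv ^^ n"] rtrancl_power by blast
  then show thesis
    using unit_path_of_shortest_walk[OF assms(1)] that by blast
qed

lemma cycle_through_edge:
  assumes "e \<in> E" "is_chain q" "boundary q = dirac_diff (s (iv e)) (s e)"
  shows "(\<lambda>f. edge_chain e f + q f) \<in> cycles"
proof -
  have "boundary (\<lambda>f. edge_chain e f + q f) = (\<lambda>_. 0)"
    unfolding boundary_add boundary_edge_chain[OF assms(1)] assms(3) dirac_diff_def by auto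
  then show ?thesis
    unfolding mem_H1_iff using is_chain_add[OF is_chain_edge_chain[OF assms(1)] assms(2)] by blast
qed

lemma non_bridge_iff: "e \<in> non_bridge V E s iv \<longleftrightarrow> e \<in> E \<and> connected_via V (E - {e, iv e}) s iv"
  unfolding non_bridge_def is_bridge_def by auto

lemma non_bridge_cycle:
  assumes "e \<in> non_bridge V E s iv"
  obtains c where "c \<in> cycles" "c e = 1"
proof -
  have e: "e \<in> E" and conn: "connected_via V (E - {e, iv e}) s iv"
    using assms non_bridge_iff by auto
  have "(s (iv e), s e) \<in> (adj (E - {e, iv e}) s iv)\<^sup>*"
    using conn source_in_V[OF iv_in_E[OF e]] source_in_V[OF e] unfolding connected_via_def by blast
  then obtain p where p: "unit_path (E - {e, iv e}) (s (iv e)) (s e) p"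
    using unit_path_exists by blast
  have "p e = 0"
    using unit_path_vanishes[OF p] e by simp
  moreover have "(\<lambda>f. edge_chain e f + p f) \<in> cycles"
    using cycle_through_edge[OF e] p unfolding unit_path_def by blast
  ultimately show thesis
    using that e by simp
qed

lemma cut_pair_cycle_eq:
  assumes "cut_pair V E s iv e0 e1" "c \<in> cycles"
  shows "c e0 = c e1"
proof -
  define S where "S = reachable (E - {e0, iv e0, e1, iv e1}) (s e0)"
  have e0: "e0 \<in> E" "connected_via V (E - {e0, iv e0}) s iv"
    and e1: "e1 \<in> E" "connected_via V (E - {e1, iv e1}) s iv"
    and "e1 \<noteq> iv e0" "s e1 \<notin> S"
    using assms(1) unfolding cut_pair_def non_bridge_iff S_def reachable_def by auto
  have "s e0 \<in> S"
    unfolding S_def reachable_def by simp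
  have leaving_S: "f \<in> {e0, iv e0, e1, iv e1}" if "f \<in> leaving S" for f
    using leaving_reachable_notin that unfolding S_def leaving_def by blast
  have "e0 \<noteq> e1"
    using assms(1) unfolding cut_pair_def by blast
  have "e0 \<noteq> iv e1"
    using \<open>e1 \<noteq> iv e0\<close> e1(1) by (metis iv_iv)
  have other_pair_leaves: "\<exists>f\<in>{h, iv h}. f \<in> leaving S" if "(g, h) \<in> {(e0, e1), (e1, e0)}" for g h
  proof -
    have "g \<in> E" "connected_via V (E - {g, iv g}) s iv"
      using that e0 e1 by auto
    then have "(s e0, s e1) \<in> (adj (E - {g, iv g}) s iv)\<^sup>*"
      using source_in_V e0(1) e1(1) unfolding connected_via_def by blast
    then obtain f where "f \<in> E - {g, iv g}" "f \<in> leaving S"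
      using leaving_exists \<open>s e0 \<in> S\<close> \<open>s e1 \<notin> S\<close> by (metis Diff_subset)
    then show ?thesis
      using leaving_S[of f] that \<open>e1 \<noteq> iv e0\<close> \<open>e0 \<noteq> iv e1\<close> \<open>e0 \<noteq> e1\<close> by auto
  qed
  have "s (iv e0) \<notin> S"
    using other_pair_leaves[of e1 e0] \<open>s e0 \<in> S\<close> e0(1) unfolding leaving_def by auto
  have "s (iv e1) \<in> S"
    using other_pair_leaves[of e0 e1] \<open>s e1 \<notin> S\<close> unfolding leaving_def by auto
  have "leaving S = {e0, iv e1}"
  proof
    show "leaving S \<subseteq> {e0, iv e1}"
      using leaving_S \<open>s (iv e0) \<notin> S\<close> \<open>s e1 \<notin> S\<close> unfolding leaving_def by auto
    show "{e0, iv e1} \<subseteq> leaving S"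
      using e0(1) e1(1) iv_in_E \<open>s e0 \<in> S\<close> \<open>s (iv e0) \<notin> S\<close> \<open>s (iv e1) \<in> S\<close> \<open>s e1 \<notin> S\<close>
      unfolding leaving_def by auto
  qed
  then show ?thesis
    using leaving_pair_cycle_eq \<open>e0 \<noteq> iv e1\<close> e1(1) assms(2) by blast
qed

lemma closing_flow_value:
  assumes e0: "e0 \<in> E" and "e1 \<noteq> e0" "e1 \<noteq> iv e0" and eq: "\<forall>c\<in>cycles. c e0 = c e1"
    and q: "is_chain q" "boundary q = dirac_diff (s (iv e0)) (s e0)" "q e0 = 0"
  shows "q e1 = 1"
proof -
  have "(\<lambda>f. edge_chain e0 f + q f) \<in> cycles"
    using cycle_through_edge[OF e0 q(1,2)] .
  then show ?thesis
    using eq q(3) edge_chain_other[of e1 e0] assms(2,3) e0 by force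
qed

lemma cycle_eq_no_path:
  assumes e0: "e0 \<in> E" and e1: "e1 \<in> E" "e1 \<noteq> e0" "e1 \<noteq> iv e0"
    and eq: "\<forall>c\<in>cycles. c e0 = c e1"
  shows "(s (iv e0), s e0) \<notin> (adj (E - {e0, iv e0, e1, iv e1}) s iv)\<^sup>*"
proof
  assume "(s (iv e0), s e0) \<in> (adj (E - {e0, iv e0, e1, iv e1}) s iv)\<^sup>*"
  then obtain p where p: "unit_path (E - {e0, iv e0, e1, iv e1}) (s (iv e0)) (s e0) p"
    using unit_path_exists[of "E - {e0, iv e0, e1, iv e1}"] by blast
  have "p e0 = 0" "p e1 = 0"
    using unit_path_vanishes[OF p] e0 e1 by auto
  then show False
    using closing_flow_value[OF e0 e1(2,3) eq, of p] p unfolding unit_path_def by simp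
qed

lemma reaches_endpoint:
  assumes n0: "e0 \<in> non_bridge V E s iv"
    and "(s (iv e0), s e0) \<notin> (adj (E - {e0, iv e0, e1, iv e1}) s iv)\<^sup>*"
  shows "(s (iv e0), s e1) \<in> (adj (E - {e0, iv e0, e1, iv e1}) s iv)\<^sup>* \<or>
    (s (iv e0), s (iv e1)) \<in> (adj (E - {e0, iv e0, e1, iv e1}) s iv)\<^sup>*"
proof -
  define T where "T = reachable (E - {e0, iv e0, e1, iv e1}) (s (iv e0))"
  have e0: "e0 \<in> E" and "connected_via V (E - {e0, iv e0}) s iv"
    using n0 non_bridge_iff by auto
  then have "(s (iv e0), s e0) \<in> (adj (E - {e0, iv e0}) s iv)\<^sup>*"
    unfolding connected_via_def using source_in_V iv_in_E by blast
  moreover have "s (iv e0) \<in> T" "s e0 \<notin> T"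
    using assms(2) unfolding T_def reachable_def by simp_all
  ultimately obtain f where f: "f \<in> E - {e0, iv e0}" "f \<in> leaving T"
    using leaving_exists[OF _ Diff_subset] by blast
  then have "f = e1 \<or> f = iv e1" "s f \<in> T"
    using leaving_reachable_notin unfolding T_def leaving_def by blast+
  then show ?thesis
    unfolding T_def reachable_def by auto
qed

lemma cycle_eq_separates:
  assumes n0: "e0 \<in> non_bridge V E s iv" and e1: "e1 \<in> E" "e1 \<noteq> e0" "e1 \<noteq> iv e0"
    and eq: "\<forall>c\<in>cycles. c e0 = c e1"
  shows "(s e0, s e1) \<notin> (adj (E - {e0, iv e0, e1, iv e1}) s iv)\<^sup>*"
proof
  define E4 where "E4 = E - {e0, iv e0, e1, iv e1}"
  define u where "u = s (iv e0)"
  define v where "v = s e0"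
  have e0: "e0 \<in> E" "e0 \<noteq> iv e1"
    using n0 e1 non_bridge_iff by auto
  have "E4 \<subseteq> E"
    unfolding E4_def by blast
  have avoid: "p e0 = 0 \<and> p e1 = 0" if "unit_path E4 x y p" for p x y
    using unit_path_vanishes[OF that] e0 e1 unfolding E4_def by auto
  note closing = closing_flow_value[OF e0(1) e1(2,3) eq, folded u_def v_def]
  assume "(s e0, s e1) \<in> (adj E4 s iv)\<^sup>*"
  then obtain p2 where p2: "unit_path E4 v (s e1) p2"
    using unit_path_exists \<open>E4 \<subseteq> E\<close> unfolding v_def by blast
  \<comment> \<open>combine p2 with a path from u to an endpoint of e1 into a flow from u to v\<close>
  consider "(u, s e1) \<in> (adj E4 s iv)\<^sup>*" | "(u, s (iv e1)) \<in> (adj E4 s iv)\<^sup>*"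
    using reaches_endpoint[OF n0 cycle_eq_no_path[OF e0(1) e1 eq]] unfolding E4_def u_def by blast
  then show False
  proof cases
    case 1
    then obtain p3 where p3: "unit_path E4 u (s e1) p3"
      using unit_path_exists \<open>E4 \<subseteq> E\<close> by blast
    have "is_chain (\<lambda>x. p3 x - p2 x)"
      using p2 p3 is_chain_diff unfolding unit_path_def by blast
    moreover have "boundary (\<lambda>x. p3 x - p2 x) = dirac_diff u v"
      using p2 p3 unfolding boundary_diff unit_path_def dirac_diff_def by auto
    ultimately show False
      using closing[of "\<lambda>x. p3 x - p2 x"] avoid[OF p2] avoid[OF p3] by simp
  next
    case 2
    then obtain p1 where p1: "unit_path E4 u (s (iv e1)) p1"
      using unit_path_exists \<open>E4 \<subseteq> E\<close> by blast
    define q where "q x = p1 x - edge_chain e1 x - p2 x" for x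
    have "is_chain q"
      unfolding q_def[abs_def]
      by (intro is_chain_diff is_chain_edge_chain e1) (use p1 p2 in \<open>simp_all add: unit_path_def\<close>)
    moreover have "boundary q = dirac_diff u v"
      using p1 p2 unfolding q_def[abs_def] boundary_diff boundary_edge_chain[OF e1(1)] unit_path_def
      by (simp add: dirac_diff_def fun_eq_iff)
    moreover have "q e0 = 0" "q e1 = -1"
      using avoid[OF p1] avoid[OF p2] edge_chain_other[of e0 e1] e0 e1 unfolding q_def by auto
    ultimately show False
      using closing[of q] by simp
  qed
qed

lemma cycle_eq_cut_pair:
  assumes n0: "e0 \<in> non_bridge V E s iv" and n1: "e1 \<in> non_bridge V E s iv" and "e1 \<noteq> e0"
    and eq: "\<forall>c\<in>cycles. c e0 = c e1"
  shows "cut_pair V E s iv e0 e1"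
proof -
  have e0: "e0 \<in> E" and e1: "e1 \<in> E"
    using n0 n1 non_bridge_iff by auto
  obtain c0 where "c0 \<in> cycles" "c0 e0 = 1"
    using non_bridge_cycle[OF n0] .
  moreover have "c0 (iv e0) = -1"
    using cycle_antisym[OF \<open>c0 \<in> cycles\<close> e0] \<open>c0 e0 = 1\<close> by simp
  ultimately have "e1 \<noteq> iv e0"
    using eq by force
  have "\<not> connected_via V (E - {e0, iv e0, e1, iv e1}) s iv"
    using cycle_eq_no_path[OF e0 e1 \<open>e1 \<noteq> e0\<close> \<open>e1 \<noteq> iv e0\<close> eq] e0 source_in_V iv_in_E
    unfolding connected_via_def by blast
  then show ?thesis
    unfolding cut_pair_def
    using n0 n1 \<open>e1 \<noteq> e0\<close> \<open>e1 \<noteq> iv e0\<close> cycle_eq_separates[OF n0 e1 \<open>e1 \<noteq> e0\<close> \<open>e1 \<noteq> iv e0\<close> eq]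
    by blast
qed

lemma cut_rel_iff:
  "cut_rel V E s iv e0 e1 \<longleftrightarrow>
     e0 \<in> non_bridge V E s iv \<and> e1 \<in> non_bridge V E s iv \<and> (\<forall>c\<in>cycles. c e0 = c e1)"
  unfolding cut_rel_def using cut_pair_cycle_eq cycle_eq_cut_pair by blast

lemma positive_support_connects:
  assumes "is_chain F" "boundary F = (\<lambda>x. a * dirac_diff u v x)" "a > 0" "u \<in> V"
  shows "(u, v) \<in> (adj {e \<in> E. F e > 0} s iv)\<^sup>*"
proof (rule ccontr)
  define S where "S = reachable {e \<in> E. F e > 0} u"
  assume "(u, v) \<notin> (adj {e \<in> E. F e > 0} s iv)\<^sup>*"
  then have "sum F (leaving S) = a"
    using sum_leaving_flow[OF assms(1,2)] assms(4) unfolding S_def reachable_def by simp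
  moreover have "F e \<le> 0" if "e \<in> leaving S" for e
    using leaving_reachable_notin[of e] that unfolding S_def leaving_def by force
  then have "sum F (leaving S) \<le> 0"
    by (rule sum_nonpos)
  ultimately show False
    using assms(3) by simp
qed

definition cycle_class :: "'e \<Rightarrow> 'e set" where
  "cycle_class e0 = {e \<in> E. \<forall>c\<in>cycles. c e = c e0}"

lemma detour_exists:
  assumes e0: "e0 \<in> E" and p: "unit_path (E - {e0, iv e0}) (s (iv e0)) (s e0) p"
  shows "(s (iv e0), s e0) \<in>
    (adj {e \<in> E - {e0, iv e0}. p e \<noteq> 1 \<or> e \<in> cycle_class e0 \<or> iv e \<in> cycle_class e0} s iv)\<^sup>*"
proof (rule ccontr)
  define R where "R = reachable {e \<in> E - {e0, iv e0}. p e \<noteq> 1 \<or> e \<in> cycle_class e0 \<or> iv e \<in> cycle_class e0} (s (iv e0))"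
  define L where "L = leaving R - {iv e0}"
  assume "\<not> ?thesis"
  then have "s e0 \<notin> R" "s (iv e0) \<in> R"
    unfolding R_def reachable_def by auto
  then have "iv e0 \<in> leaving R"
    using e0 iv_in_E unfolding leaving_def by auto
  then have leaving_R: "leaving R = insert (iv e0) L"
    unfolding L_def by blast
  \<comment> \<open>besides iv e0 only edges traversed by p leave R; as p crosses the cut once, there is just one\<close>
  have L: "p f = 1 \<and> f \<notin> cycle_class e0" if "f \<in> L" for f
    using that leaving_reachable_notin[of f] \<open>s e0 \<notin> R\<close> unfolding L_def R_def leaving_def by auto
  have "sum p (leaving R) = 1"
    using sum_leaving_flow[of p 1] p \<open>s (iv e0) \<in> R\<close> \<open>s e0 \<notin> R\<close> e0 iv_in_E source_in_V
    unfolding unit_path_def by simp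
  moreover have "p (iv e0) = 0"
    using unit_path_vanishes[OF p] e0 by simp
  moreover have "finite L" "iv e0 \<notin> L"
    unfolding L_def leaving_def using finite_E by simp_all
  ultimately have "sum p L = 1"
    unfolding leaving_R by simp
  moreover have "sum p L = of_nat (card L)"
    using L by simp
  ultimately obtain es where "L = {es}"
    using card_1_singletonE by force
  then have "leaving R = {es, iv e0}" "es \<noteq> iv e0" "es \<in> E"
    using leaving_R unfolding L_def leaving_def by auto
  then have "es \<in> cycle_class e0"
    using leaving_pair_cycle_eq e0 unfolding cycle_class_def by blast
  then show False
    using L \<open>L = {es}\<close> by blast
qed

lemma double_flow_exists:
  assumes n0: "e0 \<in> non_bridge V E s iv"
  obtains F where "is_chain F" "boundary F = (\<lambda>x. 2 * dirac_diff (s (iv e0)) (s e0) x)" "F e0 = 0"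
    "\<And>f. f \<notin> cycle_class e0 \<Longrightarrow> iv f \<notin> cycle_class e0 \<Longrightarrow> F f \<in> {-1, 0, 1}"
proof -
  define E' where "E' = E - {e0, iv e0}"
  define K where "K = cycle_class e0"
  have e0: "e0 \<in> E" and "connected_via V E' s iv"
    using n0 unfolding non_bridge_iff E'_def by auto
  then obtain p where p: "unit_path E' (s (iv e0)) (s e0) p"
    using unit_path_exists[of E'] source_in_V iv_in_E unfolding connected_via_def E'_def by blast
  define A where "A = {e \<in> E'. p e \<noteq> 1 \<or> e \<in> K \<or> iv e \<in> K}"
  obtain q where q: "unit_path A (s (iv e0)) (s e0) q"
    using unit_path_exists[of A] detour_exists[OF e0] p unfolding A_def E'_def K_def by blast
  define F where "F x = p x + q x" for x
  have "is_chain F" "boundary F = (\<lambda>x. 2 * dirac_diff (s (iv e0)) (s e0) x)"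
    using p q is_chain_add unfolding F_def[abs_def] unit_path_def boundary_add by auto
  moreover have "F e0 = 0"
    using unit_path_vanishes[OF p, of e0] unit_path_vanishes[OF q, of e0] e0
    unfolding F_def A_def E'_def by simp
  \<comment> \<open>outside K the detour q never runs along p in the same direction\<close>
  moreover have "F f \<in> {-1, 0, 1}" if "f \<notin> K" "iv f \<notin> K" for f
  proof (cases "f \<in> E")
    case True
    have "p f \<in> {-1, 0, 1}" "q f \<in> {-1, 0, 1}" "p (iv f) = - p f" "q (iv f) = - q f"
      using p q True unfolding unit_path_def is_chain_def by blast+
    moreover have "\<not> (p f = 1 \<and> q f = 1)" "\<not> (p (iv f) = 1 \<and> q (iv f) = 1)"
      using q that True iv_in_E unfolding unit_path_def A_def by auto
    ultimately show ?thesis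
      unfolding F_def by auto
  qed (use p q in \<open>simp add: F_def unit_path_def is_chain_def\<close>)
  ultimately show thesis
    using that unfolding K_def by blast
qed

lemma unit_path_below_flow:
  assumes F: "is_chain F" "boundary F = (\<lambda>x. 2 * dirac_diff u v x)" and "u \<in> V"
  obtains \<phi> where "unit_path {e \<in> E. F e > 0} u v \<phi>"
    "\<And>f. F f \<in> {-1, 0, 1} \<Longrightarrow> \<phi> f * (F f - \<phi> f) = 0"
proof -
  have "(u, v) \<in> (adj {e \<in> E. F e > 0} s iv)\<^sup>*"
    using positive_support_connects[OF F] \<open>u \<in> V\<close> by simp
  then obtain \<phi> where \<phi>: "unit_path {e \<in> E. F e > 0} u v \<phi>"
    using unit_path_exists[of "{e \<in> E. F e > 0}"] by blast
  moreover have "\<phi> f * (F f - \<phi> f) = 0" if "F f \<in> {-1, 0, 1}" for f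
  proof -
    consider "\<phi> f = 1" | "\<phi> f = 0" | "\<phi> f = -1"
      using \<phi> unfolding unit_path_def by blast
    then show ?thesis
    proof cases
      case 1
      then show ?thesis
        using \<phi> that unfolding unit_path_def by fastforce
    next
      case 3
      then have "f \<in> E"
        using unit_path_support(1)[OF \<phi>] by simp
      then have "\<phi> (iv f) = 1"
        using 3 \<phi> unfolding unit_path_def is_chain_def by simp
      then have "F f < 0"
        using \<phi> F(1) \<open>f \<in> E\<close> unfolding unit_path_def is_chain_def by fastforce
      then show ?thesis
        using 3 that by auto
    qed simp
  qed
  ultimately show thesis
    using that by blast
qed

lemma two_cycles_through_edge:
  assumes n0: "e0 \<in> non_bridge V E s iv"
  obtains c0 c1 where "c0 \<in> cycles" "c1 \<in> cycles" "c0 e0 = 1" "c1 e0 = 1"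
    "\<And>f. f \<notin> cycle_class e0 \<Longrightarrow> iv f \<notin> cycle_class e0 \<Longrightarrow> c0 f * c1 f = 0"
proof -
  let ?K = "cycle_class e0"
  have e0: "e0 \<in> E"
    using n0 non_bridge_iff by auto
  obtain F where F: "is_chain F" "boundary F = (\<lambda>x. 2 * dirac_diff (s (iv e0)) (s e0) x)"
    and "F e0 = 0" and F_unit: "\<And>f. f \<notin> ?K \<Longrightarrow> iv f \<notin> ?K \<Longrightarrow> F f \<in> {-1, 0, 1}"
    using double_flow_exists[OF n0] by blast
  obtain \<phi> where \<phi>: "unit_path {e \<in> E. F e > 0} (s (iv e0)) (s e0) \<phi>"
    and exhaust: "\<And>f. F f \<in> {-1, 0, 1} \<Longrightarrow> \<phi> f * (F f - \<phi> f) = 0"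
    using unit_path_below_flow[OF F] e0 iv_in_E source_in_V by blast
  define \<psi> where "\<psi> x = F x - \<phi> x" for x
  have "F (iv e0) = 0"
    using F(1) \<open>F e0 = 0\<close> e0 unfolding is_chain_def by simp
  then have "\<phi> e0 = 0" "\<psi> e0 = 0"
    using unit_path_vanishes[OF \<phi>, of e0] \<open>F e0 = 0\<close> e0 unfolding \<psi>_def by auto
  have "is_chain \<psi>"
    using is_chain_diff F(1) \<phi> unfolding \<psi>_def[abs_def] unit_path_def by blast
  moreover have "boundary \<psi> = dirac_diff (s (iv e0)) (s e0)"
    using F(2) \<phi> unfolding \<psi>_def[abs_def] unit_path_def boundary_diff
    by (simp add: dirac_diff_def fun_eq_iff)
  ultimately have c1: "(\<lambda>f. edge_chain e0 f + \<psi> f) \<in> cycles"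
    using cycle_through_edge[OF e0] by blast
  have c0: "(\<lambda>f. edge_chain e0 f + \<phi> f) \<in> cycles"
    using cycle_through_edge[OF e0] \<phi> unfolding unit_path_def by blast
  have disjoint: "(edge_chain e0 f + \<phi> f) * (edge_chain e0 f + \<psi> f) = 0"
    if "f \<notin> ?K" "iv f \<notin> ?K" for f
  proof -
    have "e0 \<in> ?K"
      using e0 unfolding cycle_class_def by blast
    then have "edge_chain e0 f = 0"
      using that e0 by (metis edge_chain_other iv_iv)
    then show ?thesis
      using exhaust[OF F_unit[OF that]] unfolding \<psi>_def by simp
  qed
  show thesis
    by (rule that[OF c0 c1 _ _ disjoint]) (use \<open>\<phi> e0 = 0\<close> \<open>\<psi> e0 = 0\<close> e0 in simp_all)
qed

section \<open>The image of the pairing\<close>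

lemma sum_edge_vec:
  assumes "X \<subseteq> E"
  shows "(\<Sum>e\<in>X. g e * edge_vec E iv e f) =
    (if f \<in> E then (if f \<in> X then g f else 0) + (if iv f \<in> X then g (iv f) else 0) else 0)"
proof (cases "f \<in> E")
  case True
  have "edge_vec E iv e f = of_bool (e = f) + of_bool (e = iv f)" if "e \<in> X" for e
    using that assms True iv_neq unfolding edge_vec_def by (auto simp: iv_eq_iff)
  then have "(\<Sum>e\<in>X. g e * edge_vec E iv e f) =
      (\<Sum>e\<in>X. (if e = f then g e else 0) + (if e = iv f then g e else 0))"
    by (intro sum.cong) auto
  then show ?thesis
    using True finite_subset[OF assms finite_E] by (simp add: sum.distrib)
qed (simp add: edge_vec_def)

lemma formal_sum_apply:
  "K \<subseteq> E \<Longrightarrow> formal_sum E iv K f = (if f \<in> E then of_bool (f \<in> K) + of_bool (iv f \<in> K) else 0)"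
  unfolding formal_sum_def using sum_edge_vec[of K "\<lambda>_. 1" f] by simp

lemma ext_pairing_apply:
  assumes "c0 \<in> cycles" "c1 \<in> cycles"
  shows "ext_pairing E iv c0 c1 f = (if f \<in> E then 2 * (c0 f * c1 f) else 0)"
  unfolding ext_pairing_def using sum_edge_vec[of E "\<lambda>e. c0 e * c1 e" f]
    cycle_antisym[OF assms(1)] cycle_antisym[OF assms(2)] iv_in_E by simp

end

locale connected_graph = finite_graph +
  assumes connected: "connected_via V E s iv"
begin

lemma cycle_vanishes_on_bridge:
  assumes "e \<in> E" "e \<notin> non_bridge V E s iv" "c \<in> cycles"
  shows "c e = 0"
proof -
  define E1 where "E1 = E - {e, iv e}"
  obtain a b where "a \<in> V" "b \<in> V" "(a, b) \<notin> (adj E1 s iv)\<^sup>*"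
    using assms(1,2) unfolding non_bridge_iff connected_via_def E1_def by blast
  define S where "S = reachable E1 a"
  have "(a, b) \<in> (adj E s iv)\<^sup>*" "a \<in> S" "b \<notin> S"
    using connected \<open>a \<in> V\<close> \<open>b \<in> V\<close> \<open>(a, b) \<notin> _\<close> unfolding connected_via_def S_def reachable_def
    by auto
  then obtain f where "f \<in> leaving S"
    using leaving_exists by blast
  moreover have "leaving S \<subseteq> {e, iv e}"
    using leaving_reachable_notin unfolding S_def E1_def leaving_def by blast
  moreover have "\<not> (e \<in> leaving S \<and> iv e \<in> leaving S)"
    unfolding leaving_def by auto
  ultimately have "leaving S = {e} \<or> leaving S = {iv e}"
    by blast
  then show ?thesis
    using sum_leaving_cycle[OF assms(3), of S] cycle_antisym[OF assms(3,1)] by auto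
qed

lemma cycle_class_subset_non_bridge:
  assumes "e0 \<in> non_bridge V E s iv"
  shows "cycle_class e0 \<subseteq> non_bridge V E s iv"
proof
  fix e assume e: "e \<in> cycle_class e0"
  obtain c where "c \<in> cycles" "c e0 = 1"
    using non_bridge_cycle[OF assms] .
  then show "e \<in> non_bridge V E s iv"
    using e cycle_vanishes_on_bridge unfolding cycle_class_def by force
qed

lemma max_cut_systems_eq: "max_cut_systems V E s iv = cycle_class ` non_bridge V E s iv"
proof -
  have "{e1. cut_rel V E s iv e0 e1} = cycle_class e0" if "e0 \<in> non_bridge V E s iv" for e0
    using cycle_class_subset_non_bridge[OF that] that
    unfolding cut_rel_iff cycle_class_def non_bridge_def by auto
  then show ?thesis
    unfolding max_cut_systems_def by auto
qed

lemma cycle_class_disjoint: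
  assumes "cycle_class a \<noteq> cycle_class b"
  shows "cycle_class a \<inter> cycle_class b = {}"
proof (rule ccontr)
  assume "cycle_class a \<inter> cycle_class b \<noteq> {}"
  then have "\<forall>c\<in>cycles. c a = c b"
    unfolding cycle_class_def by force
  then have "cycle_class a = cycle_class b"
    unfolding cycle_class_def by auto
  with assms show False ..
qed

lemma sum_over_max_cut_systems:
  "(\<Sum>e\<in>non_bridge V E s iv. h e) = (\<Sum>K\<in>max_cut_systems V E s iv. \<Sum>e\<in>K. h e)"
proof -
  let ?NB = "non_bridge V E s iv"
  have "finite ?NB"
    using finite_E unfolding non_bridge_def by simp
  have "\<Union> (cycle_class ` ?NB) = ?NB"
    using cycle_class_subset_non_bridge by (auto simp: cycle_class_def non_bridge_def)
  moreover have "\<forall>K\<in>cycle_class ` ?NB. finite K"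
    using cycle_class_subset_non_bridge \<open>finite ?NB\<close> finite_subset by blast
  moreover have "\<forall>K\<in>cycle_class ` ?NB. \<forall>K'\<in>cycle_class ` ?NB. K \<noteq> K' \<longrightarrow> K \<inter> K' = {}"
    using cycle_class_disjoint by blast
  ultimately show ?thesis
    unfolding max_cut_systems_eq using sum.Union_disjoint[of "cycle_class ` ?NB" h] by simp
qed

lemma ext_pairing_in_span:
  assumes "c0 \<in> cycles" "c1 \<in> cycles"
  shows "ext_pairing E iv c0 c1 \<in> rat_span (formal_sum E iv ` max_cut_systems V E s iv)"
proof -
  let ?h = "\<lambda>e f. c0 e * c1 e * edge_vec E iv e f"
  have "ext_pairing E iv c0 c1 = (\<lambda>f. \<Sum>e\<in>non_bridge V E s iv. ?h e f)"
    unfolding ext_pairing_def using cycle_vanishes_on_bridge assms finite_E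
    by (intro ext sum.mono_neutral_right) (auto simp: non_bridge_def)
  also have "\<dots> = (\<lambda>f. \<Sum>K\<in>max_cut_systems V E s iv. \<Sum>e\<in>K. ?h e f)"
    unfolding sum_over_max_cut_systems ..
  also have "\<dots> \<in> rat_span (formal_sum E iv ` max_cut_systems V E s iv)"
  proof (rule rat_span_sum)
    fix K assume K: "K \<in> max_cut_systems V E s iv"
    then obtain e0 where "K = cycle_class e0"
      unfolding max_cut_systems_eq by blast
    define a where "a = c0 e0 * c1 e0"
    have "c0 e * c1 e = a" if "e \<in> K" for e
    proof -
      have "c0 e = c0 e0" "c1 e = c1 e0"
        using that assms unfolding \<open>K = cycle_class e0\<close> cycle_class_def by blast+
      then show ?thesis
        unfolding a_def by simp
    qed
    then have "(\<lambda>f. \<Sum>e\<in>K. ?h e f) = (\<lambda>f. a * formal_sum E iv K f)"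
      unfolding formal_sum_def sum_distrib_left by (intro ext sum.cong) simp_all
    also have "\<dots> \<in> rat_span (formal_sum E iv ` max_cut_systems V E s iv)"
      using K rat_span_superset by (intro rat_span_scale) blast
    finally show "(\<lambda>f. \<Sum>e\<in>K. ?h e f) \<in> \<dots>" .
  qed
  finally show ?thesis .
qed

lemma ext_pairing_two_cycles:
  assumes c: "c0 \<in> cycles" "c1 \<in> cycles" "c0 e0 = 1" "c1 e0 = 1"
    and disjoint: "\<And>f. f \<notin> cycle_class e0 \<Longrightarrow> iv f \<notin> cycle_class e0 \<Longrightarrow> c0 f * c1 f = 0"
  shows "ext_pairing E iv c0 c1 = (\<lambda>f. 2 * formal_sum E iv (cycle_class e0) f)"
proof
  fix f
  let ?K = "cycle_class e0"
  have on_K: "c0 e = 1 \<and> c1 e = 1" if "e \<in> ?K" for e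
  proof -
    have "c0 e = c0 e0" "c1 e = c1 e0"
      using that c(1,2) unfolding cycle_class_def by blast+
    then show ?thesis
      using c(3,4) by simp
  qed
  have "c0 f * c1 f = of_bool (f \<in> ?K) + of_bool (iv f \<in> ?K)" if "f \<in> E"
  proof -
    have minus: "c0 (iv f) = - c0 f" "c1 (iv f) = - c1 f"
      using cycle_antisym c(1,2) that by blast+
    consider "f \<in> ?K" | "iv f \<in> ?K" | "f \<notin> ?K" "iv f \<notin> ?K"
      by blast
    then show ?thesis
    proof cases
      case 1
      then have "iv f \<notin> ?K"
        using on_K[of f] on_K[of "iv f"] minus by fastforce
      then show ?thesis
        using 1 on_K[OF 1] by simp
    next
      case 2
      then have "f \<notin> ?K"
        using on_K[of f] on_K[of "iv f"] minus by fastforce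
      then show ?thesis
        using 2 on_K[OF 2] minus by simp
    qed (simp add: disjoint)
  qed
  moreover have "?K \<subseteq> E"
    unfolding cycle_class_def by blast
  ultimately show "ext_pairing E iv c0 c1 f = 2 * formal_sum E iv ?K f"
    using formal_sum_apply[of ?K f] ext_pairing_apply[OF c(1,2), of f] by simp
qed

lemma formal_sum_in_span:
  assumes "e0 \<in> non_bridge V E s iv"
  shows "formal_sum E iv (cycle_class e0) \<in>
    rat_span {ext_pairing E iv c0 c1 | c0 c1. c0 \<in> cycles \<and> c1 \<in> cycles}"
proof -
  obtain c0 c1 where c: "c0 \<in> cycles" "c1 \<in> cycles"
    and "ext_pairing E iv c0 c1 = (\<lambda>f. 2 * formal_sum E iv (cycle_class e0) f)"
    using two_cycles_through_edge[OF assms] ext_pairing_two_cycles by metis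
  then have "formal_sum E iv (cycle_class e0) = (\<lambda>f. 1 / 2 * ext_pairing E iv c0 c1 f)"
    by simp
  moreover have "ext_pairing E iv c0 c1 \<in> {ext_pairing E iv c0 c1 | c0 c1. c0 \<in> cycles \<and> c1 \<in> cycles}"
    using c by blast
  then have "(\<lambda>f. 1 / 2 * ext_pairing E iv c0 c1 f) \<in>
      rat_span {ext_pairing E iv c0 c1 | c0 c1. c0 \<in> cycles \<and> c1 \<in> cycles}"
    by (intro rat_span_scale subsetD[OF rat_span_superset])
  ultimately show ?thesis
    by simp
qed

end

theorem lemma9p21:
  fixes V :: "'v set" and E :: "'e set" and s :: "'e \<Rightarrow> 'v" and iv :: "'e \<Rightarrow> 'e"
  assumes "graph V E s iv"
    and "connected_via V E s iv"
  shows "rat_span {ext_pairing E iv c0 c1 | c0 c1. c0 \<in> H1 V E s iv \<and> c1 \<in> H1 V E s iv}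
       = rat_span (formal_sum E iv ` max_cut_systems V E s iv)"
proof -
  interpret connected_graph V E s iv
    using assms by unfold_locales
  show ?thesis
  proof (rule rat_span_eqI)
    show "{ext_pairing E iv c0 c1 | c0 c1. c0 \<in> cycles \<and> c1 \<in> cycles}
        \<subseteq> rat_span (formal_sum E iv ` max_cut_systems V E s iv)"
      using ext_pairing_in_span by blast
    show "formal_sum E iv ` max_cut_systems V E s iv
        \<subseteq> rat_span {ext_pairing E iv c0 c1 | c0 c1. c0 \<in> cycles \<and> c1 \<in> cycles}"
      using formal_sum_in_span unfolding max_cut_systems_eq by blast
  qed
qed

end
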